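(* For every $\theta\in\Theta$ and $n\ge1$ with $P_\theta(\theta\in\hat\Theta_{1-\varepsilon}(Y^{(n)}))>0$, $$P_\theta\Big(\theta\in\bigcap_{m>n}\hat\Theta_{1-\varepsilon}(Y^{(m)})\ \Big|\ \theta\in\hat\Theta_{1-\varepsilon}(Y^{(n)})\Big)\ge1-\varepsilon .$$
   Context: Let $Y^{(\infty)}=(Y_1,Y_2,\ldots)$ have joint distribution $P_\theta$, $\theta\in\Theta\subseteq\mathbb{R}^p$; $Y^{(n)}=(Y_1,\ldots,Y_n)$ has density $p_n(y^{(n)};\theta)$, strictly positive on a support not depending on $\theta$, forming a consistent family in $n$. Let $\pi$ be a strictly positive probability density on $\Theta$, $q_n(y^{(n)})=\int_\Theta p_n(y^{(n)};\theta)\pi(\theta)d\theta$, and for $0<\varepsilon<1$ let Robbins' region be $\hat\Theta_{1-\varepsilon}(y^{(n)})=\{\theta\in\Theta:p_n(y^{(n)};\theta)\ge\varepsilon q_n(y^{(n)})\}$. *)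

theory Defs
  imports "HOL-Probability.Probability"
begin

definition obs :: "(nat \<Rightarrow> 'w \<Rightarrow> 'a) \<Rightarrow> nat \<Rightarrow> 'w \<Rightarrow> (nat \<Rightarrow> 'a)" where
  "obs Y n \<omega> = (\<lambda>i\<in>{..<n}. Y i \<omega>)"

definition mixdens :: "'b::euclidean_space set \<Rightarrow> ('b \<Rightarrow> real) \<Rightarrow> ('y \<Rightarrow> 'b \<Rightarrow> real) \<Rightarrow> 'y \<Rightarrow> ennreal" where
  "mixdens \<Theta> \<pi> pn y = (\<integral>\<^sup>+\<theta>\<in>\<Theta>. ennreal (pn y \<theta> * \<pi> \<theta>) \<partial>lborel)"

definition robbins_region :: "'b::euclidean_space set \<Rightarrow> ('b \<Rightarrow> real) \<Rightarrow> ('y \<Rightarrow> 'b \<Rightarrow> real) \<Rightarrow> real \<Rightarrow> 'y \<Rightarrow> 'b set" where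
  "robbins_region \<Theta> \<pi> pn \<epsilon> y = {\<theta>\<in>\<Theta>. ennreal (pn y \<theta>) \<ge> ennreal \<epsilon> * mixdens \<Theta> \<pi> pn y}"

end

theory Submission
  imports Defs
begin

text \<open>Write \<open>R\<^sub>m\<close> for Robbins' region computed from the first \<open>m\<close> observations and let
  \<open>Q = \<integral> P\<^sub>t \<pi>(t) dt\<close> be the prior mixture, whose density on those observations is \<open>q\<^sub>m\<close>. Split the event
  \<open>\<theta> \<in> R\<^sub>n\<close> but \<open>\<theta> \<notin> R\<^sub>m\<close> for some \<open>m > n\<close> according to the first such \<open>m\<close>. There
  \<open>p\<^sub>m(\<theta>) < \<epsilon> q\<^sub>m\<close>, so each piece has \<open>P\<^sub>\<theta>\<close>-probability at most \<open>\<epsilon>\<close> times its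
  \<open>Q\<close>-probability, and summing gives at most \<open>\<epsilon> Q(\<theta> \<in> R\<^sub>n)\<close>. Finally
  \<open>Q(\<theta> \<in> R\<^sub>n) \<le> P\<^sub>\<theta>(\<theta> \<in> R\<^sub>n)\<close>: off \<open>R\<^sub>n\<close> we have \<open>p\<^sub>n(\<theta>) < q\<^sub>n\<close>, and both
  measures have total mass one.\<close>

definition first_exit :: "(nat \<Rightarrow> 'a set) \<Rightarrow> nat \<Rightarrow> nat \<Rightarrow> 'a set" where
  "first_exit E n k = {x \<in> E n. n < k \<and> x \<notin> E k \<and> (\<forall>j\<in>{n<..<k}. x \<in> E j)}"

lemma disjoint_family_first_exit: "disjoint_family (first_exit E n)"
proof (unfold disjoint_family_on_def, intro ballI impI)
  fix k k' :: nat assume "k \<noteq> k'"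
  moreover have "first_exit E n i \<inter> first_exit E n j = {}" if "i < j" for i j
    using that by (auto simp: first_exit_def)
  ultimately show "first_exit E n k \<inter> first_exit E n k' = {}"
    by (metis Int_commute linorder_neqE_nat)
qed

lemma UN_first_exit: "(\<Union>k. first_exit E n k) = {x \<in> E n. \<exists>m>n. x \<notin> E m}"
proof (intro equalityI subsetI)
  fix x assume "x \<in> {x \<in> E n. \<exists>m>n. x \<notin> E m}"
  then have x: "x \<in> E n" and ex: "\<exists>m. n < m \<and> x \<notin> E m" by auto
  define k where "k = (LEAST m. n < m \<and> x \<notin> E m)"
  have "n < k \<and> x \<notin> E k"
    unfolding k_def using ex by (rule LeastI_ex)
  moreover have "\<And>j. n < j \<Longrightarrow> j < k \<Longrightarrow> x \<in> E j"
    unfolding k_def using not_less_Least by blast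
  ultimately have "x \<in> first_exit E n k" using x by (auto simp: first_exit_def)
  then show "x \<in> (\<Union>k. first_exit E n k)" by blast
qed (auto simp: first_exit_def)

lemma restrict_obs: "j \<le> k \<Longrightarrow> restrict (obs Y k \<omega>) {..<j} = obs Y j \<omega>"
  by (auto simp: obs_def fun_eq_iff)

lemma measurable_obs:
  "(\<And>i. Y i \<in> measurable M A) \<Longrightarrow> obs Y m \<in> measurable M (PiM {..<m} (\<lambda>_. A))"
  unfolding obs_def by measurable

locale parametric_observation_model =
  fixes \<Theta> :: "'b::euclidean_space set"
    and A :: "'a measure"
    and M0 :: "'w measure"
    and P :: "'b \<Rightarrow> 'w measure"
    and Y :: "nat \<Rightarrow> 'w \<Rightarrow> 'a"
    and \<nu> :: "nat \<Rightarrow> (nat \<Rightarrow> 'a) measure"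
    and p :: "nat \<Rightarrow> (nat \<Rightarrow> 'a) \<Rightarrow> 'b \<Rightarrow> real"
    and \<pi> :: "'b \<Rightarrow> real"
  assumes Theta_borel: "\<Theta> \<in> sets borel"
    and P_prob: "\<And>t. t \<in> \<Theta> \<Longrightarrow> prob_space (P t)"
    and P_sets: "\<And>t. t \<in> \<Theta> \<Longrightarrow> sets (P t) = sets M0"
    and Y_meas: "\<And>i. Y i \<in> measurable M0 A"
    and nu_sf: "\<And>m. sigma_finite_measure (\<nu> m)"
    and nu_sets: "\<And>m. sets (\<nu> m) = sets (PiM {..<m} (\<lambda>_. A))"
    and p_meas: "\<And>m. (\<lambda>(y, t). p m y t) \<in>
                   borel_measurable (PiM {..<m} (\<lambda>_. A) \<Otimes>\<^sub>M restrict_space lborel \<Theta>)"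
    and p_density: "\<And>m t. t \<in> \<Theta> \<Longrightarrow>
                   distr (P t) (PiM {..<m} (\<lambda>_. A)) (obs Y m) = density (\<nu> m) (\<lambda>y. ennreal (p m y t))"
    and pi_meas: "\<pi> \<in> borel_measurable (restrict_space lborel \<Theta>)"
    and pi_nonneg: "\<And>t. t \<in> \<Theta> \<Longrightarrow> 0 \<le> \<pi> t"
    and pi_int: "(\<integral>\<^sup>+t\<in>\<Theta>. ennreal (\<pi> t) \<partial>lborel) = 1"
begin

abbreviation "PM m \<equiv> PiM {..<m} (\<lambda>_::nat. A)"
abbreviation "L \<equiv> restrict_space lborel \<Theta>"
abbreviation "obs_event m C \<equiv> obs Y m -` C \<inter> space M0"

lemma space_L: "space L = \<Theta>"
  by (simp add: space_restrict_space)

lemma sigma_finite_L: "sigma_finite_measure L"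
  by (rule sigma_finite_measure_restrict_space) (auto simp: Theta_borel lborel.sigma_finite_measure_axioms)

lemma space_P: "t \<in> \<Theta> \<Longrightarrow> space (P t) = space M0"
  using P_sets by (rule sets_eq_imp_space_eq)

lemma space_nu: "space (\<nu> m) = space (PM m)"
  using nu_sets by (rule sets_eq_imp_space_eq)

lemma measurable_nu_iff: "measurable (\<nu> m) N = measurable (PM m) N"
  by (rule measurable_cong_sets) (auto simp: nu_sets)

lemma measurable_pair_nu_iff: "measurable (\<nu> m \<Otimes>\<^sub>M L) N = measurable (PM m \<Otimes>\<^sub>M L) N"
  by (intro measurable_cong_sets sets_pair_measure_cong) (auto simp: nu_sets)

lemma obs_measurable: "obs Y m \<in> measurable M0 (PM m)"
  by (rule measurable_obs) (rule Y_meas)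

lemma sets_obs_event: "C \<in> sets (PM m) \<Longrightarrow> obs_event m C \<in> sets M0"
  using obs_measurable by (rule measurable_sets)

lemma measurable_likelihood: "t \<in> \<Theta> \<Longrightarrow> (\<lambda>y. p m y t) \<in> borel_measurable (PM m)"
proof -
  assume "t \<in> \<Theta>"
  then have "(\<lambda>y. (y, t)) \<in> measurable (PM m) (PM m \<Otimes>\<^sub>M L)"
    by (auto simp: space_L intro!: measurable_Pair)
  from measurable_compose[OF this p_meas] show ?thesis by simp
qed

lemma measurable_joint_density:
  "(\<lambda>(y, t). ennreal (p m y t * \<pi> t)) \<in> borel_measurable (PM m \<Otimes>\<^sub>M L)"
proof -
  have "(\<lambda>x. \<pi> (snd x)) \<in> borel_measurable (PM m \<Otimes>\<^sub>M L)"
    using pi_meas by measurable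
  then have "(\<lambda>x. ennreal ((case x of (y, t) \<Rightarrow> p m y t) * \<pi> (snd x)))
      \<in> borel_measurable (PM m \<Otimes>\<^sub>M L)"
    using p_meas by measurable
  then show ?thesis by (simp add: case_prod_beta')
qed

lemma mixdens_eq: "mixdens \<Theta> \<pi> (p m) y = (\<integral>\<^sup>+t. ennreal (p m y t * \<pi> t) \<partial>L)"
  unfolding mixdens_def by (subst nn_integral_restrict_space) (auto simp: Theta_borel)

lemma measurable_mixdens: "mixdens \<Theta> \<pi> (p m) \<in> borel_measurable (PM m)"
proof -
  interpret sigma_finite_measure L by (rule sigma_finite_L)
  show ?thesis
    unfolding mixdens_eq
    using measurable_joint_density by (rule borel_measurable_nn_integral)
qed

lemma emeasure_obs_event:
  assumes t: "t \<in> \<Theta>" and C: "C \<in> sets (PM m)"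
  shows "emeasure (P t) (obs_event m C) = (\<integral>\<^sup>+y\<in>C. ennreal (p m y t) \<partial>\<nu> m)"
proof -
  have "emeasure (P t) (obs_event m C) = emeasure (distr (P t) (PM m) (obs Y m)) C"
    using C obs_measurable space_P[OF t] measurable_cong_sets[OF P_sets[OF t] refl]
    by (subst emeasure_distr) auto
  also have "\<dots> = emeasure (density (\<nu> m) (\<lambda>y. ennreal (p m y t))) C"
    using p_density[OF t] by simp
  also have "\<dots> = (\<integral>\<^sup>+y\<in>C. ennreal (p m y t) \<partial>\<nu> m)"
    using measurable_likelihood[OF t] C by (intro emeasure_density) (auto simp: measurable_nu_iff nu_sets)
  finally show ?thesis .
qed

lemma measurable_emeasure_obs_event:
  assumes C: "C \<in> sets (PM m)"
  shows "(\<lambda>t. emeasure (P t) (obs_event m C)) \<in> borel_measurable L"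
proof (rule measurable_cong[THEN iffD2])
  show "emeasure (P t) (obs_event m C) = (\<integral>\<^sup>+y\<in>C. ennreal (p m y t) \<partial>\<nu> m)"
    if "t \<in> space L" for t
    using that C by (simp add: space_L emeasure_obs_event)
  interpret sigma_finite_measure "\<nu> m" by (rule nu_sf)
  have "(\<lambda>(y, t). ennreal (p m y t) * indicator C y) \<in> borel_measurable (\<nu> m \<Otimes>\<^sub>M L)"
    unfolding measurable_pair_nu_iff using p_meas C by measurable
  then have "(\<lambda>(t, y). ennreal (p m y t) * indicator C y) \<in> borel_measurable (L \<Otimes>\<^sub>M \<nu> m)"
    by (subst (asm) measurable_pair_swap_iff) simp
  then show "(\<lambda>t. \<integral>\<^sup>+y\<in>C. ennreal (p m y t) \<partial>\<nu> m) \<in> borel_measurable L"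
    by (rule borel_measurable_nn_integral)
qed

text \<open>The prior mixture \<open>Q\<close>, only as a set function: \<open>t \<mapsto> P t B\<close> is known to be measurable
  just for events \<open>B\<close> determined by finitely many observations.\<close>

definition mixture :: "'w set \<Rightarrow> ennreal" where
  "mixture B = (\<integral>\<^sup>+t. ennreal (\<pi> t) * emeasure (P t) B \<partial>L)"

lemma mixture_obs_event:
  assumes C: "C \<in> sets (PM m)"
  shows "mixture (obs_event m C) = (\<integral>\<^sup>+y\<in>C. mixdens \<Theta> \<pi> (p m) y \<partial>\<nu> m)"
proof -
  interpret pair_sigma_finite "\<nu> m" L
    unfolding pair_sigma_finite_def using nu_sf sigma_finite_L by auto
  have joint: "(\<lambda>(y, t). ennreal (p m y t * \<pi> t) * indicator C y) \<in> borel_measurable (\<nu> m \<Otimes>\<^sub>M L)"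
    unfolding measurable_pair_nu_iff using measurable_joint_density C by measurable
  have "mixture (obs_event m C) = (\<integral>\<^sup>+t. \<integral>\<^sup>+y. ennreal (p m y t * \<pi> t) * indicator C y \<partial>\<nu> m \<partial>L)"
    unfolding mixture_def
  proof (rule nn_integral_cong)
    fix t assume "t \<in> space L"
    then have t: "t \<in> \<Theta>" by (simp add: space_L)
    have "ennreal (\<pi> t) * emeasure (P t) (obs_event m C)
        = (\<integral>\<^sup>+y. ennreal (\<pi> t) * (ennreal (p m y t) * indicator C y) \<partial>\<nu> m)"
      using measurable_likelihood[OF t] C
      by (simp add: emeasure_obs_event[OF t C] measurable_nu_iff nu_sets nn_integral_cmult)
    also have "\<dots> = (\<integral>\<^sup>+y. ennreal (p m y t * \<pi> t) * indicator C y \<partial>\<nu> m)"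
      using pi_nonneg[OF t] by (simp add: ennreal_mult' mult_ac)
    finally show "ennreal (\<pi> t) * emeasure (P t) (obs_event m C)
        = (\<integral>\<^sup>+y. ennreal (p m y t * \<pi> t) * indicator C y \<partial>\<nu> m)" .
  qed
  also have "\<dots> = (\<integral>\<^sup>+y. \<integral>\<^sup>+t. ennreal (p m y t * \<pi> t) * indicator C y \<partial>L \<partial>\<nu> m)"
    using Fubini'[of "\<lambda>y t. ennreal (p m y t * \<pi> t) * indicator C y"] joint by simp
  also have "\<dots> = (\<integral>\<^sup>+y\<in>C. mixdens \<Theta> \<pi> (p m) y \<partial>\<nu> m)"
    by (intro nn_integral_cong) (simp add: mixdens_eq split: split_indicator)
  finally show ?thesis .
qed

lemma mixture_space: "mixture (space M0) = 1"
proof -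
  have "mixture (space M0) = (\<integral>\<^sup>+t. ennreal (\<pi> t) \<partial>L)"
    unfolding mixture_def
    by (intro nn_integral_cong) (simp add: space_L prob_space.emeasure_space_1[OF P_prob] flip: space_P)
  also have "\<dots> = 1"
    using pi_int by (subst nn_integral_restrict_space) (auto simp: Theta_borel)
  finally show ?thesis .
qed

lemma mixture_mono: "B \<subseteq> B' \<Longrightarrow> B' \<in> sets M0 \<Longrightarrow> mixture B \<le> mixture B'"
  unfolding mixture_def
  by (intro nn_integral_mono mult_left_mono emeasure_mono) (auto simp: space_L P_sets)

lemma mixture_add_compl:
  assumes C: "C \<in> sets (PM m)"
  shows "mixture (obs_event m C) + mixture (obs_event m (space (PM m) - C)) = 1"
proof -
  have C': "space (PM m) - C \<in> sets (PM m)" using C by auto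
  have "mixture (obs_event m C) + mixture (obs_event m (space (PM m) - C))
      = (\<integral>\<^sup>+t. ennreal (\<pi> t) * emeasure (P t) (obs_event m C)
            + ennreal (\<pi> t) * emeasure (P t) (obs_event m (space (PM m) - C)) \<partial>L)"
    unfolding mixture_def
    using measurable_emeasure_obs_event[OF C] measurable_emeasure_obs_event[OF C'] pi_meas
    by (intro nn_integral_add[symmetric]) auto
  also have "\<dots> = mixture (space M0)"
    unfolding mixture_def
  proof (intro nn_integral_cong)
    fix t assume "t \<in> space L"
    then have t: "t \<in> \<Theta>" by (simp add: space_L)
    have "obs_event m C \<union> obs_event m (space (PM m) - C) = space M0"
      using measurable_space[OF obs_measurable] by auto
    then have "emeasure (P t) (obs_event m C) + emeasure (P t) (obs_event m (space (PM m) - C))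
        = emeasure (P t) (space M0)"
      using sets_obs_event[OF C] sets_obs_event[OF C'] P_sets[OF t]
      by (subst plus_emeasure) auto
    then show "ennreal (\<pi> t) * emeasure (P t) (obs_event m C)
            + ennreal (\<pi> t) * emeasure (P t) (obs_event m (space (PM m) - C))
        = ennreal (\<pi> t) * emeasure (P t) (space M0)"
      by (simp add: distrib_left[symmetric])
  qed
  finally show ?thesis by (simp add: mixture_space)
qed

lemma suminf_mixture:
  assumes disj: "disjoint_family F" and F: "\<And>k. F k = obs_event k (C k)"
    and C: "\<And>k. C k \<in> sets (PM k)"
  shows "(\<Sum>k. mixture (F k)) = mixture (\<Union>k. F k)"
proof -
  have "(\<Sum>k. mixture (F k)) = (\<integral>\<^sup>+t. (\<Sum>k. ennreal (\<pi> t) * emeasure (P t) (F k)) \<partial>L)"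
    unfolding mixture_def F
    using measurable_emeasure_obs_event[OF C] pi_meas by (intro nn_integral_suminf[symmetric]) auto
  also have "\<dots> = mixture (\<Union>k. F k)"
    unfolding mixture_def
  proof (intro nn_integral_cong)
    fix t assume "t \<in> space L"
    then have "range F \<subseteq> sets (P t)"
      using sets_obs_event[OF C] by (auto simp: F space_L P_sets)
    then show "(\<Sum>k. ennreal (\<pi> t) * emeasure (P t) (F k)) = ennreal (\<pi> t) * emeasure (P t) (\<Union>k. F k)"
      using disj by (simp add: suminf_emeasure)
  qed
  finally show ?thesis .
qed

definition covering :: "real \<Rightarrow> 'b \<Rightarrow> nat \<Rightarrow> (nat \<Rightarrow> 'a) set" where
  "covering \<epsilon> \<theta> m = {y \<in> space (PM m). ennreal \<epsilon> * mixdens \<Theta> \<pi> (p m) y \<le> ennreal (p m y \<theta>)}"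

lemma sets_covering: "\<theta> \<in> \<Theta> \<Longrightarrow> covering \<epsilon> \<theta> m \<in> sets (PM m)"
  unfolding covering_def using measurable_mixdens measurable_likelihood by measurable

lemma obs_event_covering:
  "\<theta> \<in> \<Theta> \<Longrightarrow> obs_event m (covering \<epsilon> \<theta> m)
      = {\<omega> \<in> space M0. \<theta> \<in> robbins_region \<Theta> \<pi> (p m) \<epsilon> (obs Y m \<omega>)}"
  using measurable_space[OF obs_measurable] by (auto simp: covering_def robbins_region_def)

lemma emeasure_le_mixture_outside_covering:
  assumes \<theta>: "\<theta> \<in> \<Theta>" and C: "C \<in> sets (PM m)" and outside: "C \<inter> covering \<epsilon> \<theta> m = {}"
  shows "emeasure (P \<theta>) (obs_event m C) \<le> ennreal \<epsilon> * mixture (obs_event m C)"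
proof -
  have "emeasure (P \<theta>) (obs_event m C) = (\<integral>\<^sup>+y\<in>C. ennreal (p m y \<theta>) \<partial>\<nu> m)"
    using \<theta> C by (rule emeasure_obs_event)
  also have "\<dots> \<le> (\<integral>\<^sup>+y. ennreal \<epsilon> * (mixdens \<Theta> \<pi> (p m) y * indicator C y) \<partial>\<nu> m)"
  proof (intro nn_integral_mono)
    fix y assume "y \<in> space (\<nu> m)"
    then have "y \<in> C \<Longrightarrow> ennreal (p m y \<theta>) \<le> ennreal \<epsilon> * mixdens \<Theta> \<pi> (p m) y"
      using outside by (auto simp: covering_def space_nu)
    then show "ennreal (p m y \<theta>) * indicator C y \<le> ennreal \<epsilon> * (mixdens \<Theta> \<pi> (p m) y * indicator C y)"
      by (simp split: split_indicator)
  qed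
  also have "\<dots> = ennreal \<epsilon> * mixture (obs_event m C)"
    using measurable_mixdens C
    by (simp add: mixture_obs_event nn_integral_cmult measurable_nu_iff nu_sets)
  finally show ?thesis .
qed

lemma mixture_covering_le:
  assumes \<theta>: "\<theta> \<in> \<Theta>" and "\<epsilon> \<le> 1"
  shows "mixture (obs_event m (covering \<epsilon> \<theta> m)) \<le> emeasure (P \<theta>) (obs_event m (covering \<epsilon> \<theta> m))"
proof -
  interpret prob_space "P \<theta>" using \<theta> by (rule P_prob)
  define C where "C = covering \<epsilon> \<theta> m"
  define D where "D = space (PM m) - C"
  have C: "C \<in> sets (PM m)" unfolding C_def using \<theta> by (rule sets_covering)
  then have D: "D \<in> sets (PM m)" by (auto simp: D_def)
  have "emeasure (P \<theta>) (obs_event m D) \<le> ennreal \<epsilon> * mixture (obs_event m D)"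
    using \<theta> D by (rule emeasure_le_mixture_outside_covering) (auto simp: C_def D_def)
  also have "\<dots> \<le> mixture (obs_event m D)"
    using \<open>\<epsilon> \<le> 1\<close> mult_right_mono[of "ennreal \<epsilon>" 1 "mixture (obs_event m D)"] by simp
  finally have PD: "emeasure (P \<theta>) (obs_event m D) \<le> mixture (obs_event m D)" .
  have "obs_event m C \<union> obs_event m D = space (P \<theta>)"
    using measurable_space[OF obs_measurable] by (auto simp: D_def space_P[OF \<theta>])
  then have P1: "emeasure (P \<theta>) (obs_event m C) + emeasure (P \<theta>) (obs_event m D) = 1"
    using sets_obs_event[OF C] sets_obs_event[OF D] P_sets[OF \<theta>]
    by (subst plus_emeasure) (auto simp: D_def emeasure_space_1)
  have Q1: "mixture (obs_event m C) + mixture (obs_event m D) = 1"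
    unfolding D_def using C by (rule mixture_add_compl)
  have "mixture (obs_event m C) + emeasure (P \<theta>) (obs_event m D)
      \<le> emeasure (P \<theta>) (obs_event m C) + emeasure (P \<theta>) (obs_event m D)"
    using PD P1 Q1 by (metis add.commute add_left_mono)
  then show ?thesis
    unfolding C_def
    by (simp add: ennreal_add_left_cancel_le add.commute[of _ "emeasure (P \<theta>) (obs_event m D)"] emeasure_eq_measure)
qed

definition exit_set :: "real \<Rightarrow> 'b \<Rightarrow> nat \<Rightarrow> nat \<Rightarrow> (nat \<Rightarrow> 'a) set" where
  "exit_set \<epsilon> \<theta> n k = {y \<in> space (PM k). n < k \<and> restrict y {..<n} \<in> covering \<epsilon> \<theta> n
      \<and> y \<notin> covering \<epsilon> \<theta> k \<and> (\<forall>j\<in>{n<..<k}. restrict y {..<j} \<in> covering \<epsilon> \<theta> j)}"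

lemma sets_exit_set:
  assumes \<theta>: "\<theta> \<in> \<Theta>"
  shows "exit_set \<epsilon> \<theta> n k \<in> sets (PM k)"
proof (cases "n < k")
  case True
  have past: "{y \<in> space (PM k). restrict y {..<j} \<in> covering \<epsilon> \<theta> j} \<in> sets (PM k)"
    if "j \<le> k" for j
  proof -
    have "(\<lambda>y. restrict y {..<j}) \<in> measurable (PM k) (PM j)"
      using that by (intro measurable_restrict_subset) auto
    from measurable_sets[OF this sets_covering[OF \<theta>]] show ?thesis
      by (simp add: vimage_def Int_def conj_commute)
  qed
  have now: "{y \<in> space (PM k). y \<notin> covering \<epsilon> \<theta> k} \<in> sets (PM k)"
    using sets_covering[OF \<theta>] by (auto simp: set_diff_eq[symmetric])
  have "{y \<in> space (PM k). (restrict y {..<n} \<in> covering \<epsilon> \<theta> n \<and> y \<notin> covering \<epsilon> \<theta> k)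
      \<and> (\<forall>j\<in>{n<..<k}. restrict y {..<j} \<in> covering \<epsilon> \<theta> j)} \<in> sets (PM k)"
    using True past now
    by (intro sets.sets_Collect_conj sets.sets_Collect_finite_All) auto
  then show ?thesis using True by (simp add: exit_set_def conj_ac)
qed (simp add: exit_set_def)

abbreviation "coverage_event \<epsilon> \<theta> m \<equiv> obs_event m (covering \<epsilon> \<theta> m)"

lemma first_exit_covering:
  "first_exit (coverage_event \<epsilon> \<theta>) n = (\<lambda>k. obs_event k (exit_set \<epsilon> \<theta> n k))"
  using measurable_space[OF obs_measurable]
  by (auto simp: fun_eq_iff first_exit_def exit_set_def restrict_obs)

lemma drop_out_eq:
  "{\<omega> \<in> coverage_event \<epsilon> \<theta> n. \<exists>m>n. \<omega> \<notin> coverage_event \<epsilon> \<theta> m}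
      = (\<Union>k. obs_event k (exit_set \<epsilon> \<theta> n k))"
  using UN_first_exit[of "coverage_event \<epsilon> \<theta>" n] by (simp add: first_exit_covering)

lemma sets_drop_out:
  "\<theta> \<in> \<Theta> \<Longrightarrow> {\<omega> \<in> coverage_event \<epsilon> \<theta> n. \<exists>m>n. \<omega> \<notin> coverage_event \<epsilon> \<theta> m} \<in> sets M0"
  unfolding drop_out_eq using sets_obs_event[OF sets_exit_set] by (intro sets.countable_UN) auto

lemma emeasure_drop_out_le:
  assumes \<theta>: "\<theta> \<in> \<Theta>" and "\<epsilon> \<le> 1"
  shows "emeasure (P \<theta>) {\<omega> \<in> coverage_event \<epsilon> \<theta> n. \<exists>m>n. \<omega> \<notin> coverage_event \<epsilon> \<theta> m}
      \<le> ennreal \<epsilon> * emeasure (P \<theta>) (coverage_event \<epsilon> \<theta> n)"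
proof -
  let ?F = "\<lambda>k. obs_event k (exit_set \<epsilon> \<theta> n k)"
  have disj: "disjoint_family ?F"
    using disjoint_family_first_exit[of "coverage_event \<epsilon> \<theta>" n] by (simp add: first_exit_covering)
  have "range ?F \<subseteq> sets (P \<theta>)"
    using sets_obs_event[OF sets_exit_set[OF \<theta>]] P_sets[OF \<theta>] by auto
  then have "emeasure (P \<theta>) (\<Union>k. ?F k) = (\<Sum>k. emeasure (P \<theta>) (?F k))"
    using disj by (rule suminf_emeasure[symmetric])
  also have "\<dots> \<le> (\<Sum>k. ennreal \<epsilon> * mixture (?F k))"
  proof (rule suminf_le)
    show "emeasure (P \<theta>) (?F k) \<le> ennreal \<epsilon> * mixture (?F k)" for k
      using \<theta> sets_exit_set[OF \<theta>]
      by (rule emeasure_le_mixture_outside_covering) (auto simp: exit_set_def)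
  qed auto
  also have "\<dots> = ennreal \<epsilon> * mixture (\<Union>k. ?F k)"
    by (simp add: suminf_mixture[OF disj refl sets_exit_set[OF \<theta>]])
  also have "\<dots> \<le> ennreal \<epsilon> * mixture (coverage_event \<epsilon> \<theta> n)"
  proof (intro mult_left_mono mixture_mono)
    show "(\<Union>k. ?F k) \<subseteq> coverage_event \<epsilon> \<theta> n"
      unfolding drop_out_eq[symmetric] by blast
  qed (simp_all add: sets_obs_event sets_covering \<theta>)
  also have "\<dots> \<le> ennreal \<epsilon> * emeasure (P \<theta>) (coverage_event \<epsilon> \<theta> n)"
    using \<theta> \<open>\<epsilon> \<le> 1\<close> by (intro mult_left_mono mixture_covering_le) auto
  finally show ?thesis by (simp only: drop_out_eq)
qed

theorem cond_prob_robbins_region_ge: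
  assumes eps: "0 < \<epsilon>" "\<epsilon> < 1" and \<theta>: "\<theta> \<in> \<Theta>"
    and pos: "\<P>(\<omega> in P \<theta>. \<theta> \<in> robbins_region \<Theta> \<pi> (p n) \<epsilon> (obs Y n \<omega>)) > 0"
  shows "cond_prob (P \<theta>)
           (\<lambda>\<omega>. \<forall>m>n. \<theta> \<in> robbins_region \<Theta> \<pi> (p m) \<epsilon> (obs Y m \<omega>))
           (\<lambda>\<omega>. \<theta> \<in> robbins_region \<Theta> \<pi> (p n) \<epsilon> (obs Y n \<omega>)) \<ge> 1 - \<epsilon>"
proof -
  interpret prob_space "P \<theta>" using \<theta> by (rule P_prob)
  let ?E = "coverage_event \<epsilon> \<theta>"
  let ?Bad = "{\<omega> \<in> ?E n. \<exists>m>n. \<omega> \<notin> ?E m}"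
  have E_eq: "?E m = {\<omega> \<in> space (P \<theta>). \<theta> \<in> robbins_region \<Theta> \<pi> (p m) \<epsilon> (obs Y m \<omega>)}" for m
    using \<theta> by (simp add: obs_event_covering space_P)
  have "prob ?Bad \<le> \<epsilon> * prob (?E n)"
    using emeasure_drop_out_le[OF \<theta>, of \<epsilon> n] eps
    by (simp add: emeasure_eq_measure ennreal_mult''[symmetric] ennreal_le_iff)
  moreover have "prob (?E n - ?Bad) = prob (?E n) - prob ?Bad"
    using sets_obs_event[OF sets_covering[OF \<theta>]] sets_drop_out[OF \<theta>] P_sets[OF \<theta>]
    by (intro finite_measure_Diff) auto
  moreover have "{\<omega> \<in> space (P \<theta>). (\<forall>m>n. \<theta> \<in> robbins_region \<Theta> \<pi> (p m) \<epsilon> (obs Y m \<omega>))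
      \<and> \<theta> \<in> robbins_region \<Theta> \<pi> (p n) \<epsilon> (obs Y n \<omega>)} = ?E n - ?Bad"
    by (auto simp: E_eq)
  ultimately show ?thesis
    using pos by (simp add: cond_prob_def flip: E_eq) (simp add: field_simps)
qed

end

theorem mainTheorem9:
  fixes \<Theta> :: "'b::euclidean_space set"
    and A :: "'a measure"
    and M0 :: "'w measure"
    and P :: "'b \<Rightarrow> 'w measure"
    and Y :: "nat \<Rightarrow> 'w \<Rightarrow> 'a"
    and \<nu> :: "nat \<Rightarrow> (nat \<Rightarrow> 'a) measure"
    and S :: "nat \<Rightarrow> (nat \<Rightarrow> 'a) set"
    and p :: "nat \<Rightarrow> (nat \<Rightarrow> 'a) \<Rightarrow> 'b \<Rightarrow> real"
    and \<pi> :: "'b \<Rightarrow> real"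
    and \<epsilon> :: real and \<theta> :: 'b and n :: nat
  assumes Theta_borel: "\<Theta> \<in> sets borel"
    and P_prob: "\<And>t. t \<in> \<Theta> \<Longrightarrow> prob_space (P t)"
    and P_sets: "\<And>t. t \<in> \<Theta> \<Longrightarrow> sets (P t) = sets M0"
    and Y_meas: "\<And>i. Y i \<in> measurable M0 A"
    and nu_sf: "\<And>m. sigma_finite_measure (\<nu> m)"
    and nu_sets: "\<And>m. sets (\<nu> m) = sets (PiM {..<m} (\<lambda>_. A))"
    and p_meas: "\<And>m. (\<lambda>(y, t). p m y t) \<in>
                   borel_measurable (PiM {..<m} (\<lambda>_. A) \<Otimes>\<^sub>M restrict_space lborel \<Theta>)"
    and S_sets: "\<And>m. S m \<in> sets (PiM {..<m} (\<lambda>_. A))"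
    and p_pos: "\<And>m y t. t \<in> \<Theta> \<Longrightarrow> y \<in> S m \<Longrightarrow> p m y t > 0"
    and p_zero: "\<And>m y t. t \<in> \<Theta> \<Longrightarrow> y \<in> space (PiM {..<m} (\<lambda>_. A)) \<Longrightarrow> y \<notin> S m \<Longrightarrow> p m y t = 0"
    and p_density: "\<And>m t. t \<in> \<Theta> \<Longrightarrow>
                   distr (P t) (PiM {..<m} (\<lambda>_. A)) (obs Y m) = density (\<nu> m) (\<lambda>y. ennreal (p m y t))"
    and pi_meas: "\<pi> \<in> borel_measurable (restrict_space lborel \<Theta>)"
    and pi_pos: "\<And>t. t \<in> \<Theta> \<Longrightarrow> \<pi> t > 0"
    and pi_int: "(\<integral>\<^sup>+t\<in>\<Theta>. ennreal (\<pi> t) \<partial>lborel) = 1"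
    and eps: "0 < \<epsilon>" "\<epsilon> < 1"
    and theta: "\<theta> \<in> \<Theta>"
    and n: "n \<ge> 1"
    and pos: "\<P>(\<omega> in P \<theta>. \<theta> \<in> robbins_region \<Theta> \<pi> (p n) \<epsilon> (obs Y n \<omega>)) > 0"
  shows "cond_prob (P \<theta>)
           (\<lambda>\<omega>. \<forall>m>n. \<theta> \<in> robbins_region \<Theta> \<pi> (p m) \<epsilon> (obs Y m \<omega>))
           (\<lambda>\<omega>. \<theta> \<in> robbins_region \<Theta> \<pi> (p n) \<epsilon> (obs Y n \<omega>)) \<ge> 1 - \<epsilon>"
proof -
  interpret parametric_observation_model \<Theta> A M0 P Y \<nu> p \<pi>
  proof (rule parametric_observation_model.intro)
    show "\<And>t. t \<in> \<Theta> \<Longrightarrow> 0 \<le> \<pi> t"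
      using pi_pos by (simp add: less_imp_le)
  qed (fact Theta_borel P_prob P_sets Y_meas nu_sf nu_sets p_meas p_density pi_meas pi_int)+
  show ?thesis
    using eps theta pos by (rule cond_prob_robbins_region_ge)
qed

end
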